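(* Let $A'\to A$ be a surjection in $\mathcal{C}_{\mathbb{E}}$ whose kernel is a $1$-dimensional $\mathbb{E}$-vector space. Let $V'$ be a free $A'$-module of rank $m$ and $V=V'\otimes_{A'}A$. Then the natural map $$\mathrm{GL}(V')\to\mathrm{PGL}(V')\times_{\mathrm{PGL}(V)}\mathrm{GL}(V)\times_{\mathrm{GL}(\det V)}\mathrm{GL}(\det V')$$ is an isomorphism of groups.
   Context: $\mathbb{E}$ is a finite extension of $\mathbb{Q}_\ell$ and $\mathcal{C}_{\mathbb{E}}$ the category of local Artin $\mathbb{E}$-algebras with residue field $\mathbb{E}$. For a free module $V$ over a ring $B$, $\mathrm{GL}(V)=\mathrm{Aut}_B(V)$, $\mathrm{PGL}(V)=\mathrm{GL}(V)/B^*$, and $\det V$ is the top exterior power, so $\mathrm{GL}(\det V)=B^*$; the maps in the fibre product are reduction along $A'\to A$, the projection $\mathrm{GL}\to\mathrm{PGL}$, and the determinant. *)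

theory Defs
  imports "Jordan_Normal_Form.Determinant" "HOL-Algebra.Coset"
begin

definition is_ring_hom_cls :: "('a::comm_ring_1 \<Rightarrow> 'b::comm_ring_1) \<Rightarrow> bool" where
  "is_ring_hom_cls h \<longleftrightarrow> h 1 = 1 \<and> (\<forall>x y. h (x + y) = h x + h y \<and> h (x * y) = h x * h y)"

definition is_ideal_cls :: "'a::comm_ring_1 set \<Rightarrow> bool" where
  "is_ideal_cls I \<longleftrightarrow> 0 \<in> I \<and> (\<forall>x\<in>I. \<forall>y\<in>I. x + y \<in> I) \<and> (\<forall>x\<in>I. \<forall>r. r * x \<in> I)"

definition artinian_cls :: "'a::comm_ring_1 itself \<Rightarrow> bool" where
  "artinian_cls _ \<longleftrightarrow> (\<forall>I :: nat \<Rightarrow> 'a set.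
     (\<forall>k. is_ideal_cls (I k) \<and> I (Suc k) \<subseteq> I k) \<longrightarrow> (\<exists>N. \<forall>k\<ge>N. I k = I N))"

definition local_ring_cls :: "'a::comm_ring_1 itself \<Rightarrow> bool" where
  "local_ring_cls _ \<longleftrightarrow> (0::'a) \<noteq> 1 \<and> is_ideal_cls {x::'a. \<not> x dvd 1}"

text \<open>An object of C_E: a local Artin E-algebra (structure map iota) whose residue field
  is E, i.e. E \<rightarrow> A/m is onto (every element is congruent mod m to some iota c).\<close>
definition in_C_E :: "('e::field \<Rightarrow> 'a::comm_ring_1) \<Rightarrow> bool" where
  "in_C_E \<iota> \<longleftrightarrow> is_ring_hom_cls \<iota> \<and> local_ring_cls TYPE('a) \<and> artinian_cls TYPE('a)
     \<and> (\<forall>x::'a. \<exists>c. \<not> (x - \<iota> c) dvd 1)"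

definition hom_C_E :: "('e::field \<Rightarrow> 'a::comm_ring_1) \<Rightarrow> ('e \<Rightarrow> 'b::comm_ring_1) \<Rightarrow> ('a \<Rightarrow> 'b) \<Rightarrow> bool" where
  "hom_C_E \<iota>' \<iota> f \<longleftrightarrow> is_ring_hom_cls f \<and> (\<forall>c. f (\<iota>' c) = \<iota> c)"

definition GL_grp :: "nat \<Rightarrow> ('a::comm_ring_1) mat monoid" where
  "GL_grp n = \<lparr>carrier = {M \<in> carrier_mat n n. invertible_mat M}, mult = (*), one = 1\<^sub>m n\<rparr>"

definition scalars :: "nat \<Rightarrow> ('a::comm_ring_1) mat set" where
  "scalars n = {c \<cdot>\<^sub>m 1\<^sub>m n | c. c dvd 1}"

definition PGL_grp :: "nat \<Rightarrow> ('a::comm_ring_1) mat set monoid" where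
  "PGL_grp n = GL_grp n Mod scalars n"

definition pgl_class :: "nat \<Rightarrow> ('a::comm_ring_1) mat \<Rightarrow> 'a mat set" where
  "pgl_class n M = scalars n #>\<^bsub>GL_grp n\<^esub> M"

text \<open>GL(det V) = B^*.\<close>
definition units_grp :: "('a::comm_ring_1) itself \<Rightarrow> 'a monoid" where
  "units_grp _ = \<lparr>carrier = {c. c dvd 1}, mult = (*), one = 1\<rparr>"

text \<open>Reduction along f : A' \<rightarrow> A (V = V' \<otimes> A).\<close>
definition GL_map :: "('a::comm_ring_1 \<Rightarrow> 'b::comm_ring_1) \<Rightarrow> 'a mat \<Rightarrow> 'b mat" where
  "GL_map f M = map_mat f M"

definition PGL_map :: "nat \<Rightarrow> ('a::comm_ring_1 \<Rightarrow> 'b::comm_ring_1) \<Rightarrow> 'a mat set \<Rightarrow> 'b mat set" where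
  "PGL_map n f P = pgl_class n (GL_map f (SOME M. M \<in> P))"

text \<open>The fibre product PGL(V') x_{PGL(V)} GL(V) x_{GL(det V)} GL(det V'),
  as a subgroup of the direct product.\<close>
definition fibre_grp :: "nat \<Rightarrow> ('a::comm_ring_1 \<Rightarrow> 'b::comm_ring_1)
    \<Rightarrow> ('a mat set \<times> 'b mat \<times> 'a) monoid" where
  "fibre_grp n f = (PGL_grp n \<times>\<times> GL_grp n \<times>\<times> units_grp TYPE('a))\<lparr>carrier :=
     {(P, g, d). P \<in> carrier (PGL_grp n) \<and> g \<in> carrier (GL_grp n) \<and> d \<in> carrier (units_grp TYPE('a))
        \<and> PGL_map n f P = pgl_class n g \<and> det g = f d}\<rparr>"

definition nat_map :: "nat \<Rightarrow> ('a::comm_ring_1 \<Rightarrow> 'b::comm_ring_1) \<Rightarrow> 'a mat \<Rightarrow> 'a mat set \<times> 'b mat \<times> 'a" where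
  "nat_map n f M = (pgl_class n M, GL_map f M, det M)"

end

theory Submission
  imports Defs
begin

text \<open>Everything else is governed by the congruence subgroup \<open>1 + I\<close>, \<open>I = ker f\<close>.
  Since \<open>I = E t\<close> and \<open>t\<close> is not a unit of the local ring \<open>A'\<close>, \<open>t\<^sup>2 \<in> E t\<close> forces
  \<open>t\<^sup>2 = 0\<close>; hence \<open>e \<mapsto> 1 + e t\<close> is an isomorphism \<open>(E, +) \<cong> 1 + I\<close> under which
  \<open>c \<mapsto> c\<^sup>m\<close> becomes multiplication by \<open>m\<close>, a bijection in characteristic 0. Two matrices
  with the same image differ by a scalar \<open>c \<in> 1 + I\<close> with \<open>c\<^sup>m = 1\<close>, so \<open>c = 1\<close>.
  Conversely, given \<open>(P, g, d)\<close>, a representative of \<open>P\<close> rescaled by a lifted unit (units lift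
  because \<open>A'\<close> is local) reduces to \<open>g\<close>; its determinant then differs from \<open>d\<close> by a factor
  in \<open>1 + I\<close>, which is removed by rescaling with an \<open>m\<close>-th root in \<open>1 + I\<close>.\<close>

lemma is_ring_hom_cls_imp_comm_ring_hom:
  assumes "is_ring_hom_cls h"
  shows "comm_ring_hom h"
proof -
  have one: "h 1 = 1" and add: "\<And>x y. h (x + y) = h x + h y" and mult: "\<And>x y. h (x * y) = h x * h y"
    using assms unfolding is_ring_hom_cls_def by auto
  have "h 0 = 0" using add[of 0 0] by simp
  then show ?thesis by unfold_locales (auto simp: one add mult)
qed

lemma mult_right_cancel_unit:
  fixes a b u :: "'a::comm_monoid_mult"
  assumes "u dvd 1" and "a * u = b * u"
  shows "a = b"
proof -
  obtain w where w: "1 = u * w" using assms(1) by (rule dvdE)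
  have "a = a * u * w" by (simp add: mult.assoc flip: w)
  also have "\<dots> = b" by (simp add: assms(2) mult.assoc flip: w)
  finally show ?thesis .
qed

lemma local_ring_cls_unit_add_nonunit:
  fixes u x :: "'a::comm_ring_1"
  assumes "local_ring_cls TYPE('a)" and "u dvd 1" and "\<not> x dvd 1"
  shows "(u + x) dvd 1"
proof (rule ccontr)
  let ?N = "{x::'a. \<not> x dvd 1}"
  assume "\<not> (u + x) dvd 1"
  moreover have "(- 1) * x \<in> ?N" and "\<forall>y\<in>?N. \<forall>z\<in>?N. y + z \<in> ?N"
    using assms unfolding local_ring_cls_def is_ideal_cls_def by blast+
  ultimately have "(u + x) + (- 1) * x \<in> ?N" by blast
  then show False using assms(2) by simp
qed

lemma units_lift_along_surj_from_local_ring: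
  fixes f :: "'a::comm_ring_1 \<Rightarrow> 'b::comm_ring_1"
  assumes "local_ring_cls TYPE('a)" and "comm_ring_hom f" and "surj f" and "(0::'b) \<noteq> 1"
    and "f u dvd 1"
  shows "u dvd 1"
proof -
  interpret comm_ring_hom f by fact
  obtain w where w: "1 = f u * w" using \<open>f u dvd 1\<close> by (rule dvdE)
  obtain v where v: "f v = w" using \<open>surj f\<close> by (metis surjD)
  have "f (u * v - 1) = f u * f v - 1" by (simp add: hom_minus hom_mult)
  also have "\<dots> = 0" using v w by (metis diff_self)
  finally have "f (u * v - 1) = 0" .
  then have "\<not> (u * v - 1) dvd 1"
    using hom_dvd_1[of "u * v - 1"] dvd_0_left[of "1::'b"] \<open>(0::'b) \<noteq> 1\<close> by auto
  then have "(1 + (u * v - 1)) dvd 1"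
    by (rule local_ring_cls_unit_add_nonunit[OF assms(1) one_dvd])
  then have "u * v dvd 1" by simp
  then show ?thesis by (rule dvd_mult_left)
qed

lemma power_one_plus_square_zero:
  fixes k :: "'a::comm_semiring_1"
  assumes "k * k = 0"
  shows "(1 + k) ^ n = 1 + of_nat n * k"
proof (induction n)
  case 0
  then show ?case by simp
next
  case (Suc n)
  have "(1 + k) ^ Suc n = (1 + k) * (1 + of_nat n * k)" using Suc by simp
  also have "\<dots> = 1 + of_nat (Suc n) * k + of_nat n * (k * k)" by (simp add: algebra_simps)
  finally show ?case using assms by simp
qed

locale small_extension = I: comm_ring_hom \<iota> + F: comm_ring_hom f
  for \<iota> :: "'e::field_char_0 \<Rightarrow> 'a::comm_ring_1" and f :: "'a \<Rightarrow> 'b::comm_ring_1" +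
  fixes t :: 'a
  assumes local_source: "local_ring_cls TYPE('a)"
    and target_nontrivial: "(0::'b) \<noteq> 1"
    and generator_nonzero: "t \<noteq> 0"
    and kernel_eq: "{x. f x = 0} = {\<iota> c * t | c. True}"
begin

lemma kernel_iff: "f x = 0 \<longleftrightarrow> (\<exists>c. x = \<iota> c * t)"
  using kernel_eq by blast

lemma generator_in_kernel: "f t = 0"
  using kernel_iff[of t] by (metis I.hom_one mult_1)

lemma scalar_unit: "c \<noteq> 0 \<Longrightarrow> \<iota> c dvd 1"
  by (metis I.hom_mult I.hom_one dvdI right_inverse)

lemma generator_nonunit: "\<not> t dvd 1"
  using F.hom_dvd_1[of t] generator_in_kernel target_nontrivial by auto

lemma scalar_mult_generator_eq_0_iff: "\<iota> c * t = 0 \<longleftrightarrow> c = 0"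
  using mult_right_cancel_unit[OF scalar_unit, of c t 0] generator_nonzero
  by (auto simp: mult.commute)

lemma generator_square_zero: "t * t = 0"
proof -
  have "f (t * t) = 0" by (simp add: F.hom_mult generator_in_kernel)
  then obtain e where e: "t * t = \<iota> e * t" using kernel_iff by blast
  show ?thesis
  proof (cases "e = 0")
    case True
    with e show ?thesis by simp
  next
    case False
    then have "(- \<iota> e) dvd 1" using scalar_unit by simp
    then have "(- \<iota> e + t) dvd 1"
      by (rule local_ring_cls_unit_add_nonunit[OF local_source _ generator_nonunit])
    moreover have "t * (- \<iota> e + t) = 0 * (- \<iota> e + t)" using e by (simp add: algebra_simps)
    ultimately have "t = 0" by (rule mult_right_cancel_unit)
    with generator_nonzero show ?thesis by simp
  qed
qed

lemma congruence_subgroup_eq: "{c. f c = 1} = range (\<lambda>e. 1 + \<iota> e * t)"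
proof -
  have "f c = 1 \<longleftrightarrow> f (c - 1) = 0" for c by (simp add: F.hom_minus)
  then show ?thesis using kernel_iff by (force simp: algebra_simps)
qed

lemma power_congruence: "(1 + \<iota> e * t) ^ n = 1 + \<iota> (of_nat n * e) * t"
proof -
  have "(\<iota> e * t) * (\<iota> e * t) = 0"
    using generator_square_zero by (metis mult.left_commute mult_zero_right mult.assoc)
  then show ?thesis by (simp add: power_one_plus_square_zero I.hom_mult I.hom_of_nat mult.assoc)
qed

lemma power_bij_congruence_subgroup:
  assumes "0 < n"
  shows "bij_betw (\<lambda>c. c ^ n) {c. f c = 1} {c. f c = 1}"
  unfolding congruence_subgroup_eq
proof (rule bij_betw_imageI)
  have same_power: "e = e'" if "\<iota> (of_nat n * e) * t = \<iota> (of_nat n * e') * t" for e e'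
  proof -
    have "\<iota> (of_nat n * (e - e')) * t = 0"
      using that by (simp add: I.hom_minus right_diff_distrib left_diff_distrib)
    then show ?thesis using assms by (simp add: scalar_mult_generator_eq_0_iff)
  qed
  show "inj_on (\<lambda>c. c ^ n) (range (\<lambda>e. 1 + \<iota> e * t))"
  proof (rule inj_onI)
    fix x y
    assume "x \<in> range (\<lambda>e. 1 + \<iota> e * t)" and "y \<in> range (\<lambda>e. 1 + \<iota> e * t)" and "x ^ n = y ^ n"
    then obtain e e' where "x = 1 + \<iota> e * t" and "y = 1 + \<iota> e' * t"
      and "\<iota> (of_nat n * e) * t = \<iota> (of_nat n * e') * t"
      by (auto simp: power_congruence)
    with same_power show "x = y" by blast
  qed
  have root: "1 + \<iota> e * t = (1 + \<iota> (e / of_nat n) * t) ^ n" for e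
    using assms by (simp add: power_congruence)
  show "(\<lambda>c. c ^ n) ` range (\<lambda>e. 1 + \<iota> e * t) = range (\<lambda>e. 1 + \<iota> e * t)"
  proof (intro equalityI subsetI)
    fix x
    assume "x \<in> range (\<lambda>e. 1 + \<iota> e * t)"
    then obtain e where "x = (1 + \<iota> (e / of_nat n) * t) ^ n" using root by blast
    then show "x \<in> (\<lambda>c. c ^ n) ` range (\<lambda>e. 1 + \<iota> e * t)" by blast
  qed (auto simp: power_congruence)
qed

end

lemma smult_smult_mat: "a \<cdot>\<^sub>m (b \<cdot>\<^sub>m A) = (a * b :: 'a::semigroup_mult) \<cdot>\<^sub>m A"
  by (rule eq_matI) (auto simp: mult.assoc)

lemma one_smult_mat [simp]: "(1 :: 'a::monoid_mult) \<cdot>\<^sub>m A = A"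
  by (rule eq_matI) auto

lemma GL_grp_carrier_iff:
  "A \<in> carrier (GL_grp n) \<longleftrightarrow> A \<in> carrier_mat n n \<and> det (A :: 'a::comm_ring_1 mat) dvd 1"
proof (intro iffI conjI)
  assume "A \<in> carrier (GL_grp n)"
  then have A: "A \<in> carrier_mat n n" and "invertible_mat A" by (simp_all add: GL_grp_def)
  then obtain B where AB: "A * B = 1\<^sub>m n" and BA: "B * A = 1\<^sub>m (dim_row B)"
    unfolding invertible_mat_def inverts_mat_def by auto
  then have B: "B \<in> carrier_mat n n"
    using A by (metis carrier_matD carrier_matI index_mult_mat(2,3) index_one_mat(2,3))
  show "A \<in> carrier_mat n n" by (fact A)
  have "det A * det B = 1" using det_mult[OF A B] AB by simp
  then show "det A dvd 1" by (metis dvdI)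
next
  assume "A \<in> carrier_mat n n \<and> det A dvd 1"
  then have A: "A \<in> carrier_mat n n" and "det A dvd 1" by auto
  obtain d where d: "1 = det A * d" using \<open>det A dvd 1\<close> by (rule dvdE)
  define B where "B = d \<cdot>\<^sub>m adj_mat A"
  have B: "B \<in> carrier_mat n n" using adj_mat(1)[OF A] by (simp add: B_def)
  have "A * B = 1\<^sub>m n" "B * A = 1\<^sub>m n"
    using adj_mat[OF A] d
    by (simp_all add: B_def mult_smult_distrib[OF A] mult_smult_assoc_mat[OF _ A] smult_smult_mat
        mult.commute)
  then show "A \<in> carrier (GL_grp n)"
    using A B unfolding GL_grp_def invertible_mat_def inverts_mat_def by auto
qed

lemma GL_grp_smult:
  assumes "A \<in> carrier (GL_grp n)" and "(c::'a::comm_ring_1) dvd 1"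
  shows "c \<cdot>\<^sub>m A \<in> carrier (GL_grp n)"
  using assms dvd_power_same[of c 1 n] by (auto simp: GL_grp_carrier_iff)

lemma det_GL_map: "comm_ring_hom f \<Longrightarrow> det (GL_map f A) = f (det A)"
  by (simp add: GL_map_def comm_ring_hom.hom_det)

lemma GL_map_carrier:
  assumes "comm_ring_hom f" and "A \<in> carrier (GL_grp n)"
  shows "GL_map f A \<in> carrier (GL_grp n)"
proof -
  interpret comm_ring_hom f by fact
  show ?thesis using assms(2) by (auto simp: GL_grp_carrier_iff GL_map_def)
qed

lemma GL_map_smult:
  assumes "comm_ring_hom f"
  shows "GL_map f (c \<cdot>\<^sub>m A) = f c \<cdot>\<^sub>m GL_map f A"
proof -
  interpret comm_ring_hom f by fact
  show ?thesis unfolding GL_map_def by (rule eq_matI) (auto simp: hom_mult)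
qed

lemma GL_map_mult:
  assumes "comm_ring_hom f" and "A \<in> carrier_mat n n" and "B \<in> carrier_mat n n"
  shows "GL_map f (A * B) = GL_map f A * GL_map f B"
  unfolding GL_map_def using assms
  by (intro semiring_hom.mat_hom_mult) (auto intro: comm_ring_hom.axioms ring_hom.axioms)

lemma smult_mat_eq_self_imp_one:
  assumes "A \<in> carrier (GL_grp n)" and "0 < n" and "c \<cdot>\<^sub>m A = (A :: 'a::comm_ring_1 mat)"
  shows "c = 1"
proof -
  have A: "A \<in> carrier_mat n n" and "det A dvd 1" using assms(1) by (auto simp: GL_grp_carrier_iff)
  have "c \<cdot>\<^sub>m (A * adj_mat A) = (c \<cdot>\<^sub>m A) * adj_mat A"
    by (rule mult_smult_assoc_mat[symmetric, OF A adj_mat(1)[OF A]])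
  also have "\<dots> = A * adj_mat A" by (simp only: assms(3))
  finally have "(c \<cdot>\<^sub>m (det A \<cdot>\<^sub>m 1\<^sub>m n)) $$ (0, 0) = (det A \<cdot>\<^sub>m 1\<^sub>m n) $$ (0, 0)"
    by (simp add: adj_mat(2)[OF A])
  then have "c * det A = 1 * det A" using \<open>0 < n\<close> by simp
  with \<open>det A dvd 1\<close> show ?thesis by (rule mult_right_cancel_unit)
qed

lemma pgl_class_eq_unit_multiples:
  assumes "A \<in> carrier_mat n n"
  shows "pgl_class n A = {c \<cdot>\<^sub>m (A :: 'a::comm_ring_1 mat) | c. c dvd 1}"
proof -
  have "(c \<cdot>\<^sub>m 1\<^sub>m n) * A = c \<cdot>\<^sub>m A" for c :: 'a
    using assms by (simp add: mult_smult_assoc_mat[of _ n n])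
  then show ?thesis
    unfolding pgl_class_def r_coset_def scalars_def GL_grp_def by auto
qed

lemma mem_pgl_class: "A \<in> carrier_mat n n \<Longrightarrow> A \<in> pgl_class n (A :: 'a::comm_ring_1 mat)"
  by (auto simp: pgl_class_eq_unit_multiples intro!: exI[of _ 1])

lemma pgl_class_eq_iff:
  assumes A: "A \<in> carrier_mat n n" and B: "B \<in> carrier_mat n n"
  shows "pgl_class n A = pgl_class n B \<longleftrightarrow> (\<exists>c. c dvd 1 \<and> A = c \<cdot>\<^sub>m (B :: 'a::comm_ring_1 mat))"
proof
  assume "pgl_class n A = pgl_class n B"
  then show "\<exists>c. c dvd 1 \<and> A = c \<cdot>\<^sub>m B"
    using mem_pgl_class[OF A] by (auto simp: pgl_class_eq_unit_multiples[OF B])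
next
  assume "\<exists>c. c dvd 1 \<and> A = c \<cdot>\<^sub>m B"
  then obtain c where c: "c dvd 1" "A = c \<cdot>\<^sub>m B" by blast
  from c(1) obtain d where d: "1 = c * d" by (rule dvdE)
  then have dc: "d * c = 1" by (simp add: mult.commute)
  then have AB: "e \<cdot>\<^sub>m A = (e * c) \<cdot>\<^sub>m B" and BA: "e \<cdot>\<^sub>m B = (e * d) \<cdot>\<^sub>m A" for e
    using c(2) by (simp_all add: smult_smult_mat mult.assoc)
  have "e * c dvd 1" and "e * d dvd 1" if "e dvd 1" for e
    using that c(1) dvdI[of 1 d c] dc by auto
  with AB BA show "pgl_class n A = pgl_class n B"
    unfolding pgl_class_eq_unit_multiples[OF A] pgl_class_eq_unit_multiples[OF B]
    by (intro equalityI subsetI) (smt (verit) mem_Collect_eq)+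
qed

lemma PGL_grp_carrier: "carrier (PGL_grp n) = pgl_class n ` carrier (GL_grp n)"
  by (auto simp: PGL_grp_def FactGroup_def RCOSETS_def pgl_class_def)

lemma pgl_class_mult:
  assumes A: "A \<in> carrier_mat n n" and B: "B \<in> carrier_mat n n"
  shows "pgl_class n A \<otimes>\<^bsub>PGL_grp n\<^esub> pgl_class n B = pgl_class n (A * (B :: 'a::comm_ring_1 mat))"
proof -
  have prod: "(c \<cdot>\<^sub>m A) * (d \<cdot>\<^sub>m B) = (c * d) \<cdot>\<^sub>m (A * B)" for c d :: 'a
    using A B by (simp add: mult_smult_assoc_mat[of _ n n] mult_smult_distrib[of _ n n] smult_smult_mat
        mult.commute)
  have "pgl_class n A \<otimes>\<^bsub>PGL_grp n\<^esub> pgl_class n B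
      = {(c \<cdot>\<^sub>m A) * (d \<cdot>\<^sub>m B) | c d. c dvd 1 \<and> d dvd 1}"
    by (auto simp: PGL_grp_def FactGroup_def set_mult_def GL_grp_def
        pgl_class_eq_unit_multiples[OF A] pgl_class_eq_unit_multiples[OF B])
  also have "\<dots> = {c \<cdot>\<^sub>m (A * B) | c. c dvd 1}"
    unfolding prod by (force intro: exI[of _ 1])
  finally show ?thesis using A B by (simp add: pgl_class_eq_unit_multiples)
qed

lemma PGL_map_pgl_class:
  assumes f: "comm_ring_hom f" and A: "A \<in> carrier_mat n n"
  shows "PGL_map n f (pgl_class n A) = pgl_class n (GL_map f A)"
proof -
  interpret comm_ring_hom f by fact
  have "(SOME M. M \<in> pgl_class n A) \<in> pgl_class n A"
    using mem_pgl_class[OF A] by (rule someI)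
  then obtain c where "c dvd 1" and some: "(SOME M. M \<in> pgl_class n A) = c \<cdot>\<^sub>m A"
    by (auto simp: pgl_class_eq_unit_multiples[OF A])
  have fA: "GL_map f A \<in> carrier_mat n n" using A by (simp add: GL_map_def)
  have "PGL_map n f (pgl_class n A) = pgl_class n (f c \<cdot>\<^sub>m GL_map f A)"
    by (simp add: PGL_map_def some GL_map_smult[OF f])
  also have "\<dots> = pgl_class n (GL_map f A)"
    using pgl_class_eq_iff[OF smult_carrier_mat[OF fA] fA] hom_dvd_1[OF \<open>c dvd 1\<close>] by auto
  finally show ?thesis .
qed

lemma fibre_grp_carrier:
  "X \<in> carrier (fibre_grp n f) \<longleftrightarrow>
    (\<exists>P g d. X = (P, g, d) \<and> P \<in> carrier (PGL_grp n) \<and> g \<in> carrier (GL_grp n) \<and> d dvd 1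
      \<and> PGL_map n f P = pgl_class n g \<and> det g = f d)"
  by (cases X) (auto simp: fibre_grp_def units_grp_def)

lemma nat_map_hom:
  assumes f: "comm_ring_hom (f :: 'a::comm_ring_1 \<Rightarrow> 'b::comm_ring_1)"
  shows "nat_map n f \<in> hom (GL_grp n) (fibre_grp n f)"
proof (rule homI)
  fix M :: "'a mat"
  assume M: "M \<in> carrier (GL_grp n)"
  then have "M \<in> carrier_mat n n" and "det M dvd 1" by (simp_all add: GL_grp_carrier_iff)
  then show "nat_map n f M \<in> carrier (fibre_grp n f)"
    using M GL_map_carrier[OF f M]
    by (auto simp: fibre_grp_carrier nat_map_def PGL_grp_carrier PGL_map_pgl_class[OF f] det_GL_map[OF f])
next
  fix M N :: "'a mat"
  assume "M \<in> carrier (GL_grp n)" and "N \<in> carrier (GL_grp n)"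
  then have M: "M \<in> carrier_mat n n" and N: "N \<in> carrier_mat n n" by (simp_all add: GL_grp_carrier_iff)
  show "nat_map n f (M \<otimes>\<^bsub>GL_grp n\<^esub> N) = nat_map n f M \<otimes>\<^bsub>fibre_grp n f\<^esub> nat_map n f N"
    by (simp add: nat_map_def fibre_grp_def GL_grp_def units_grp_def
        pgl_class_mult[OF M N] GL_map_mult[OF f M N] det_mult[OF M N])
qed

lemma nat_map_inj_on:
  assumes f: "comm_ring_hom f" and "0 < n"
    and roots_inj: "inj_on (\<lambda>c. c ^ n) {c. f c = 1}"
  shows "inj_on (nat_map n f) (carrier (GL_grp n))"
proof (rule inj_onI)
  interpret comm_ring_hom f by fact
  fix M N
  assume M: "M \<in> carrier (GL_grp n)" and N: "N \<in> carrier (GL_grp n)"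
    and eq: "nat_map n f M = nat_map n f N"
  have Mc: "M \<in> carrier_mat n n" and Nc: "N \<in> carrier_mat n n" and "det N dvd 1"
    using M N by (simp_all add: GL_grp_carrier_iff)
  obtain c where "c dvd 1" and c: "M = c \<cdot>\<^sub>m N"
    using eq pgl_class_eq_iff[OF Mc Nc] by (auto simp: nat_map_def)
  have "f c \<cdot>\<^sub>m GL_map f N = GL_map f N"
    using eq by (simp add: nat_map_def c GL_map_smult[OF f])
  then have "f c = 1"
    using smult_mat_eq_self_imp_one[OF GL_map_carrier[OF f N] \<open>0 < n\<close>] by blast
  moreover have "c ^ n * det N = 1 * det N"
    using eq Nc by (simp add: nat_map_def c)
  then have "c ^ n = 1 ^ n" using \<open>det N dvd 1\<close> by (simp add: mult_right_cancel_unit)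
  ultimately have "c = 1"
    using inj_onD[OF roots_inj, of c 1] by simp
  then show "M = N" by (simp add: c)
qed

lemma nat_map_surj:
  assumes f: "comm_ring_hom f" and "surj f"
    and units_lift: "\<And>u. f u dvd 1 \<Longrightarrow> u dvd 1"
    and roots_surj: "{c. f c = 1} \<subseteq> (\<lambda>c. c ^ n) ` {c. f c = 1}"
  shows "carrier (fibre_grp n f) \<subseteq> nat_map n f ` carrier (GL_grp n)"
proof
  interpret comm_ring_hom f by fact
  fix X
  assume "X \<in> carrier (fibre_grp n f)"
  then obtain M0 g d where X: "X = (pgl_class n M0, g, d)" and M0: "M0 \<in> carrier (GL_grp n)"
    and g: "g \<in> carrier (GL_grp n)" and "d dvd 1" and det_g: "det g = f d"
    and "pgl_class n (GL_map f M0) = pgl_class n g"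
    by (auto simp: fibre_grp_carrier PGL_grp_carrier PGL_map_pgl_class[OF f] GL_grp_carrier_iff)
  then obtain u where "u dvd 1" and g_eq: "g = u \<cdot>\<^sub>m GL_map f M0"
    using pgl_class_eq_iff GL_map_carrier[OF f M0] by (metis GL_grp_carrier_iff)
  obtain u' where u': "f u' = u" using \<open>surj f\<close> by (metis surjD)
  with \<open>u dvd 1\<close> units_lift have "u' dvd 1" by blast
  define M1 where "M1 = u' \<cdot>\<^sub>m M0"
  have M1: "M1 \<in> carrier (GL_grp n)" and "GL_map f M1 = g"
    using GL_grp_smult[OF M0 \<open>u' dvd 1\<close>] by (simp_all add: M1_def GL_map_smult[OF f] u' g_eq)
  then have "det M1 dvd 1" by (simp add: GL_grp_carrier_iff)
  have det_M1: "f (det M1) = det g"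
    unfolding \<open>GL_map f M1 = g\<close>[symmetric] by (rule det_GL_map[OF f, symmetric])
  obtain w where w: "1 = det M1 * w" using \<open>det M1 dvd 1\<close> by (rule dvdE)
  have "f (d * w) = f (det M1 * w)" by (simp add: hom_mult det_g det_M1)
  also have "\<dots> = 1" by (simp flip: w)
  finally have "f (d * w) = 1" .
  then have "d * w \<in> (\<lambda>c. c ^ n) ` {c. f c = 1}" by (intro subsetD[OF roots_surj]) simp
  then obtain l where "f l = 1" and l: "l ^ n = d * w" by auto
  then have "l dvd 1" using units_lift by simp
  define M where "M = l \<cdot>\<^sub>m M1"
  have "M \<in> carrier (GL_grp n)" using GL_grp_smult[OF M1 \<open>l dvd 1\<close>] by (simp add: M_def)
  moreover have "pgl_class n M = pgl_class n M0"
    using \<open>l dvd 1\<close> \<open>u' dvd 1\<close> M0 pgl_class_eq_iff[of M n M0]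
    by (auto simp: M_def M1_def smult_smult_mat GL_grp_carrier_iff)
  moreover have "GL_map f M = g" by (simp add: M_def GL_map_smult[OF f] \<open>f l = 1\<close> \<open>GL_map f M1 = g\<close>)
  moreover have "det M = d"
  proof -
    have "det M = l ^ n * det M1" using M1 by (auto simp: M_def GL_grp_carrier_iff)
    also have "\<dots> = d * (det M1 * w)" by (simp add: l ac_simps)
    finally show ?thesis by (simp flip: w)
  qed
  ultimately show "X \<in> nat_map n f ` carrier (GL_grp n)" by (auto simp: X nat_map_def)
qed

theorem nat_map_iso_if_power_bij:
  assumes f: "comm_ring_hom f" and "surj f" and "0 < n"
    and units_lift: "\<And>u. f u dvd 1 \<Longrightarrow> u dvd 1"
    and roots: "bij_betw (\<lambda>c. c ^ n) {c. f c = 1} {c. f c = 1}"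
  shows "nat_map n f \<in> iso (GL_grp n) (fibre_grp n f)"
proof -
  have "nat_map n f \<in> hom (GL_grp n) (fibre_grp n f)" by (rule nat_map_hom[OF f])
  moreover have "inj_on (nat_map n f) (carrier (GL_grp n))"
    using nat_map_inj_on[OF f \<open>0 < n\<close>] bij_betw_imp_inj_on[OF roots] .
  moreover have "carrier (fibre_grp n f) \<subseteq> nat_map n f ` carrier (GL_grp n)"
    using nat_map_surj[OF f \<open>surj f\<close> units_lift] bij_betw_imp_surj_on[OF roots] by blast
  ultimately show ?thesis
    unfolding iso_def bij_betw_def by (blast dest: hom_carrier)
qed

theorem lemma14:
  fixes \<iota>' :: "'e::field_char_0 \<Rightarrow> 'a::comm_ring_1"
    and \<iota> :: "'e \<Rightarrow> 'b::comm_ring_1"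
    and f :: "'a \<Rightarrow> 'b"
    and m :: nat
  assumes "m \<ge> 1" and "in_C_E \<iota>'" and "in_C_E \<iota>"
    and "hom_C_E \<iota>' \<iota> f" and "surj f"
    and "\<exists>t. t \<noteq> 0 \<and> {x. f x = 0} = {\<iota>' c * t | c. True}"
  shows "nat_map m f \<in> iso (GL_grp m) (fibre_grp m f)"
proof -
  obtain t where "t \<noteq> 0" and "{x. f x = 0} = {\<iota>' c * t | c. True}" using assms(6) by blast
  with assms(2-4) interpret small_extension \<iota>' f t
    by (intro small_extension.intro small_extension_axioms.intro)
      (auto simp: in_C_E_def hom_C_E_def local_ring_cls_def intro: is_ring_hom_cls_imp_comm_ring_hom)
  show ?thesis
  proof (rule nat_map_iso_if_power_bij[OF F.comm_ring_hom_axioms \<open>surj f\<close>])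
    show "0 < m" using \<open>m \<ge> 1\<close> by simp
    show "u dvd 1" if "f u dvd 1" for u
      using units_lift_along_surj_from_local_ring[OF local_source F.comm_ring_hom_axioms \<open>surj f\<close>
          target_nontrivial that] .
    show "bij_betw (\<lambda>c. c ^ m) {c. f c = 1} {c. f c = 1}"
      using power_bij_congruence_subgroup \<open>0 < m\<close> .
  qed
qed

end
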